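(* Let $f:\mathcal X\times\mathcal Y\to\mathcal Z\cup\{*\}$ be a (possibly partial) function and let Alice's input $X$ and Bob's input $Y$ be independent random variables on $\mathcal X$ and $\mathcal Y$. Suppose a one-way protocol (Alice sends message $M$ depending on $X$, Bob outputs a value depending on $M$ and $Y$) computes $f$ with error probability at most $\epsilon$. Fix any symmetric relation on $\mathcal X$ called incompatibility, and suppose that (i) for every incompatible pair $x,x'$, $\Pr_Y[Y\text{ distinguishes }x,x']\ge\alpha>0$, and (ii) for every $x\in\mathcal X$ the number of $x'$ compatible with $x$ (including $x$ itself) is at most $N_{\max}$. Then $$I(X;M)\ge H(X)-\log N_{\max}-1-\frac{2\epsilon}{\alpha}\left(\log|\mathcal X|-\log N_{\max}\right).$$
   Context: $y$ distinguishes $x,x'$ if $f(x,y)$ and $f(x',y)$ are both defined (not $*$) and $f(x,y)\neq f(x',y)$. The protocol errs on $(x,y)$ if $f(x,y)$ is defined and Bob's output differs from it. Two inputs are compatible if they are not incompatible. $\mathcal X$ is finite; logs and information are base 2. *)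

theory Defs
  imports "HOL-Probability.Probability_Mass_Function"
begin

(* Shannon entropy (base 2) of a distribution on a finite type; 0 log 0 = 0 since ln 0 = 0 *)
definition entropy2 :: "'a::finite pmf \<Rightarrow> real" where
  "entropy2 p = - (\<Sum>a\<in>UNIV. pmf p a * log 2 (pmf p a))"

definition mutual_info2 :: "('a::finite \<times> 'b::finite) pmf \<Rightarrow> real" where
  "mutual_info2 p = (\<Sum>a\<in>UNIV. \<Sum>b\<in>UNIV.
      pmf p (a, b) * log 2 (pmf p (a, b) / (pmf (map_pmf fst p) a * pmf (map_pmf snd p) b)))"

(* y distinguishes two inputs: both values defined (None encodes the undefined value) and different *)
definition distinguishes :: "('x \<Rightarrow> 'y \<Rightarrow> 'z option) \<Rightarrow> 'y \<Rightarrow> 'x \<Rightarrow> 'x \<Rightarrow> bool" where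
  "distinguishes f y x x' \<longleftrightarrow> f x y \<noteq> None \<and> f x' y \<noteq> None \<and> f x y \<noteq> f x' y"

definition input_msg :: "'x pmf \<Rightarrow> ('x \<Rightarrow> 'm pmf) \<Rightarrow> ('x \<times> 'm) pmf" where
  "input_msg pX enc = bind_pmf pX (\<lambda>x. map_pmf (\<lambda>m. (x, m)) (enc x))"

(* Full run of the one-way protocol: X ~ pX, Y ~ pY independent, M ~ enc X,
   Bob's output Z ~ dec M Y (private randomness allowed) *)
definition protocol_run ::
  "'x pmf \<Rightarrow> 'y pmf \<Rightarrow> ('x \<Rightarrow> 'm pmf) \<Rightarrow> ('m \<Rightarrow> 'y \<Rightarrow> 'z pmf) \<Rightarrow> ('x \<times> 'y \<times> 'm \<times> 'z) pmf" where
  "protocol_run pX pY enc dec =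
     bind_pmf (pair_pmf pX pY) (\<lambda>(x, y). bind_pmf (enc x) (\<lambda>m.
       map_pmf (\<lambda>z. (x, y, m, z)) (dec m y)))"

definition error_prob ::
  "('x \<Rightarrow> 'y \<Rightarrow> 'z option) \<Rightarrow> 'x pmf \<Rightarrow> 'y pmf \<Rightarrow> ('x \<Rightarrow> 'm pmf) \<Rightarrow> ('m \<Rightarrow> 'y \<Rightarrow> 'z pmf) \<Rightarrow> real" where
  "error_prob f pX pY enc dec =
     measure_pmf.prob (protocol_run pX pY enc dec)
       {(x, y, m, z). f x y \<noteq> None \<and> f x y \<noteq> Some z}"

end

theory Submission
  imports Defs
begin

(* Call (x, m) good if Bob, given m, errs on x with probability below alpha/2 over Y.
   Two inputs good for the same m are compatible: a y distinguishing them forces an error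
   on one of them, and such y have probability at least alpha.  Hence at most Nmax inputs
   are good for each m, so the weights 1/(2 Nmax) on good and 1/(2 |X|) on bad inputs sum
   to at most 1 over x.  Gibbs' inequality against these weights gives
   I(X;M) >= H(X) - log Nmax - 1 - (log |X| - log Nmax) Pr[(X, M) bad],
   and Markov's inequality bounds Pr[(X, M) bad] by 2 epsilon / alpha. *)

lemma measure_bind_pmf:
  "measure_pmf.prob (bind_pmf M N) A = (LINT x|M. measure_pmf.prob (N x) A)"
  unfolding measure_pmf_bind
  by (rule measure_pmf.measure_bind[where N="count_space UNIV"])
     (auto intro: measure_pmf_in_subprob_algebra)

lemma integral_pmf_finite_pair:
  fixes J :: "('a::finite \<times> 'b::finite) pmf" and g :: "'a \<times> 'b \<Rightarrow> real"
  shows "(LINT p|J. g p) = (\<Sum>a\<in>UNIV. \<Sum>b\<in>UNIV. pmf J (a, b) * g (a, b))"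
proof -
  have "(LINT p|J. g p) = (\<Sum>p\<in>UNIV. g p * pmf J p)"
    by (rule integral_measure_pmf_real) auto
  also have "\<dots> = (\<Sum>a\<in>UNIV. \<Sum>b\<in>UNIV. pmf J (a, b) * g (a, b))"
    by (simp add: sum.cartesian_product mult.commute flip: UNIV_Times_UNIV)
  finally show ?thesis .
qed

lemma pmf_map_fst_finite:
  fixes J :: "('a \<times> 'b::finite) pmf"
  shows "pmf (map_pmf fst J) a = (\<Sum>b\<in>UNIV. pmf J (a, b))"
proof -
  have fiber: "fst -` {a} = Pair a ` UNIV" by auto
  show ?thesis
    unfolding pmf_map fiber by (simp add: measure_measure_pmf_finite sum.reindex inj_on_def)
qed

lemma pmf_map_snd_finite:
  fixes J :: "('a::finite \<times> 'b) pmf"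
  shows "pmf (map_pmf snd J) b = (\<Sum>a\<in>UNIV. pmf J (a, b))"
proof -
  have fiber: "snd -` {b} = (\<lambda>a. (a, b)) ` UNIV" by auto
  show ?thesis
    unfolding pmf_map fiber by (simp add: measure_measure_pmf_finite sum.reindex inj_on_def)
qed

lemma mult_log_ratio_ge:
  fixes P p r w :: real
  assumes "0 < P" "0 < p" "0 < r" "0 < w"
  shows "- P * log 2 p + P * log 2 w + (P - r * w) / ln 2 \<le> P * log 2 (P / (p * r))"
proof -
  define y where "y = r * w / P"
  have "0 < y" using assms by (simp add: y_def)
  then have "P * ln y \<le> r * w - P"
    using ln_le_minus_one[of y] \<open>0 < P\<close> by (simp add: y_def field_simps)
  then have "P * ln y / ln 2 \<le> (r * w - P) / ln 2"
    by (simp add: divide_right_mono)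
  moreover have "P * log 2 (P / (p * r)) = - P * log 2 p + P * log 2 w - P * ln y / ln 2"
    using assms by (simp add: y_def log_def ln_div ln_mult field_simps)
  ultimately show ?thesis by (simp add: diff_divide_distrib)
qed

lemma mutual_info2_ge_entropy2_plus_log_weights:
  fixes J :: "('a::finite \<times> 'b::finite) pmf" and w :: "'a \<Rightarrow> 'b \<Rightarrow> real"
  assumes w_pos: "\<And>a b. 0 < w a b" and w_sum: "\<And>b. (\<Sum>a\<in>UNIV. w a b) \<le> 1"
  shows "entropy2 (map_pmf fst J) + (LINT q|J. log 2 (w (fst q) (snd q))) \<le> mutual_info2 J"
proof -
  define P where "P a b = pmf J (a, b)" for a b
  define p where "p a = pmf (map_pmf fst J) a" for a
  define r where "r b = pmf (map_pmf snd J) b" for b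
  have p_eq: "p a = (\<Sum>b\<in>UNIV. P a b)" for a by (simp add: p_def P_def pmf_map_fst_finite)
  have r_eq: "r b = (\<Sum>a\<in>UNIV. P a b)" for b by (simp add: r_def P_def pmf_map_snd_finite)
  have P_total: "(\<Sum>a\<in>UNIV. \<Sum>b\<in>UNIV. P a b) = 1"
    using sum_pmf_eq_1[of UNIV "map_pmf fst J"] by (simp add: p_eq flip: p_def)
  have r_total: "(\<Sum>b\<in>UNIV. r b) = 1" unfolding r_def by (rule sum_pmf_eq_1) auto
  have term_le: "- P a b * log 2 (p a) + P a b * log 2 (w a b) + (P a b - r b * w a b) / ln 2
      \<le> P a b * log 2 (P a b / (p a * r b))" for a b
  proof (cases "P a b = 0")
    case True
    then show ?thesis using w_pos[of a b] by (simp add: r_def)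
  next
    case False
    then have "0 < P a b" by (simp add: P_def order_less_le)
    moreover have "P a b \<le> p a" "P a b \<le> r b"
      unfolding p_eq r_eq by (rule member_le_sum; simp add: P_def)+
    ultimately show ?thesis using w_pos by (intro mult_log_ratio_ge) auto
  qed
  have entropy: "(\<Sum>a\<in>UNIV. \<Sum>b\<in>UNIV. - P a b * log 2 (p a)) = entropy2 (map_pmf fst J)"
    by (simp add: entropy2_def p_eq sum_negf flip: p_def sum_distrib_right)
  have weights: "(\<Sum>a\<in>UNIV. \<Sum>b\<in>UNIV. P a b * log 2 (w a b)) = (LINT q|J. log 2 (w (fst q) (snd q)))"
    by (simp add: integral_pmf_finite_pair P_def)
  have "(\<Sum>a\<in>UNIV. \<Sum>b\<in>UNIV. r b * w a b) = (\<Sum>b\<in>UNIV. r b * (\<Sum>a\<in>UNIV. w a b))"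
    by (subst sum.swap) (simp add: sum_distrib_left)
  also have "\<dots> \<le> (\<Sum>b\<in>UNIV. r b)"
    by (intro sum_mono mult_right_le_one_le w_sum) (auto simp: r_def intro: sum_nonneg less_imp_le w_pos)
  finally have slack: "0 \<le> (\<Sum>a\<in>UNIV. \<Sum>b\<in>UNIV. (P a b - r b * w a b) / ln 2)"
    using P_total r_total by (simp add: sum_subtractf flip: sum_divide_distrib)
  have "entropy2 (map_pmf fst J) + (LINT q|J. log 2 (w (fst q) (snd q)))
      \<le> (\<Sum>a\<in>UNIV. \<Sum>b\<in>UNIV. - P a b * log 2 (p a) + P a b * log 2 (w a b) + (P a b - r b * w a b) / ln 2)"
    unfolding sum.distrib entropy weights using slack by linarith
  also have "\<dots> \<le> (\<Sum>a\<in>UNIV. \<Sum>b\<in>UNIV. P a b * log 2 (P a b / (p a * r b)))"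
    by (intro sum_mono term_le)
  also have "\<dots> = mutual_info2 J"
    by (simp add: mutual_info2_def P_def p_def r_def)
  finally show ?thesis .
qed

lemma mutual_info2_ge_entropy2_two_level:
  fixes J :: "('a::finite \<times> 'b::finite) pmf" and G :: "'a \<Rightarrow> 'b \<Rightarrow> bool" and N :: nat
  assumes card_G: "\<And>b. card {a. G a b} \<le> N" and "1 \<le> N" and "N \<le> CARD('a)"
  shows "entropy2 (map_pmf fst J) - log 2 N - 1
           - (log 2 CARD('a) - log 2 N) * measure_pmf.prob J {q. \<not> G (fst q) (snd q)}
         \<le> mutual_info2 J"
proof -
  define K where "K = real CARD('a)"
  define D where "D = log 2 K - log 2 N"
  define w where "w a b = (if G a b then 1 / (2 * N) else 1 / (2 * K))" for a b
  have "1 \<le> K" using assms by (simp add: K_def)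
  have w_sum: "(\<Sum>a\<in>UNIV. w a b) \<le> 1" for b
  proof -
    have "card (- {a. G a b}) \<le> CARD('a)" by (rule card_mono) auto
    then have "real (card (- {a. G a b})) / (2 * K) \<le> 1 / 2"
      using \<open>1 \<le> K\<close> by (simp add: K_def field_simps)
    moreover have "real (card {a. G a b}) / (2 * N) \<le> 1 / 2"
      using card_G[of b] \<open>1 \<le> N\<close> by (simp add: field_simps)
    moreover have "(\<Sum>a\<in>UNIV. w a b) = real (card {a. G a b}) / (2 * N) + real (card (- {a. G a b})) / (2 * K)"
      unfolding w_def by (simp add: sum.If_cases)
    ultimately show ?thesis by linarith
  qed
  have w_pos: "0 < w a b" for a b using \<open>1 \<le> N\<close> \<open>1 \<le> K\<close> by (simp add: w_def)
  have log_w: "log 2 (w a b) = - log 2 N - 1 - D * indicator {q. \<not> G (fst q) (snd q)} (a, b)" for a b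
    using \<open>1 \<le> N\<close> \<open>1 \<le> K\<close> by (simp add: w_def D_def log_divide log_mult)
  have "(LINT q|J. log 2 (w (fst q) (snd q)))
      = - log 2 N - 1 - D * measure_pmf.prob J {q. \<not> G (fst q) (snd q)}"
    by (simp add: log_w integrable_measure_pmf_finite)
  with mutual_info2_ge_entropy2_plus_log_weights[where J = J and w = w] w_pos w_sum
  show ?thesis by (simp add: D_def K_def)
qed

lemma card_le_if_pairwise_compatible:
  fixes S :: "'a::finite set"
  assumes compatible: "\<And>x x'. x \<in> S \<Longrightarrow> x' \<in> S \<Longrightarrow> \<not> incompat x x'"
    and bound: "\<And>x. card {x'. \<not> incompat x x'} \<le> N"
  shows "card S \<le> N"
proof (cases "S = {}")
  case False
  then obtain x where "x \<in> S" by blast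
  with compatible have "S \<subseteq> {x'. \<not> incompat x x'}" by blast
  then have "card S \<le> card {x'. \<not> incompat x x'}" by (rule card_mono[rotated]) simp
  with bound[of x] show ?thesis by linarith
qed simp

lemma map_fst_input_msg: "map_pmf fst (input_msg pX enc) = pX"
  unfolding input_msg_def map_bind_pmf map_pmf_comp
  by (simp add: map_pmf_const bind_return_pmf')

lemma protocol_run_via_input_msg:
  "protocol_run pX pY enc dec =
     bind_pmf (input_msg pX enc) (\<lambda>(x, m). bind_pmf pY (\<lambda>y. map_pmf (\<lambda>z. (x, y, m, z)) (dec m y)))"
  unfolding protocol_run_def input_msg_def pair_pmf_def
  by (simp add: bind_assoc_pmf bind_return_pmf bind_map_pmf cong: bind_pmf_cong)
     (subst bind_commute_pmf, rule refl)

definition decoding_error ::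
  "('x \<Rightarrow> 'y \<Rightarrow> 'z option) \<Rightarrow> 'y pmf \<Rightarrow> ('m \<Rightarrow> 'y \<Rightarrow> 'z pmf) \<Rightarrow> 'x \<Rightarrow> 'm \<Rightarrow> real" where
  "decoding_error f pY dec x m =
     (LINT y|pY. measure_pmf.prob (dec m y) {z. f x y \<noteq> None \<and> f x y \<noteq> Some z})"

lemma decoding_error_nonneg: "0 \<le> decoding_error f pY dec x m"
  unfolding decoding_error_def by (rule integral_nonneg_AE) auto

lemma error_prob_eq_expectation:
  "error_prob f pX pY enc dec =
     measure_pmf.expectation (input_msg pX enc) (\<lambda>(x, m). decoding_error f pY dec x m)"
  unfolding error_prob_def protocol_run_via_input_msg measure_bind_pmf
  by (intro Bochner_Integration.integral_cong)
     (auto simp: measure_bind_pmf decoding_error_def vimage_def)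

lemma prob_decoding_error_ge_le:
  fixes pX :: "'x::finite pmf" and enc :: "'x \<Rightarrow> 'm::finite pmf"
  assumes "0 < c"
  shows "measure_pmf.prob (input_msg pX enc) {(x, m). c \<le> decoding_error f pY dec x m}
           \<le> error_prob f pX pY enc dec / c"
proof -
  have "measure_pmf.prob (input_msg pX enc)
          {q \<in> space (input_msg pX enc). c \<le> (\<lambda>(x, m). decoding_error f pY dec x m) q}
      \<le> (LINT q|input_msg pX enc. (\<lambda>(x, m). decoding_error f pY dec x m) q) / c"
    using assms
    by (intro integral_Markov_inequality_measure[where A = UNIV])
       (auto simp: decoding_error_nonneg integrable_measure_pmf_finite)
  then show ?thesis
    by (simp add: error_prob_eq_expectation case_prod_unfold)
qed

lemma prob_distinguishes_le_decoding_error: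
  "measure_pmf.prob pY {y. distinguishes f y x x'} \<le> decoding_error f pY dec x m + decoding_error f pY dec x' m"
proof -
  define err where "err x y = measure_pmf.prob (dec m y) {z. f x y \<noteq> None \<and> f x y \<noteq> Some z}" for x y
  have err_integrable: "integrable pY (err x)" for x
    unfolding err_def by (rule measure_pmf.integrable_const_bound[where B=1]) auto
  have "indicator {y. distinguishes f y x x'} y \<le> err x y + err x' y" for y
  proof (cases "distinguishes f y x x'")
    case True
    then have "{z. f x y \<noteq> None \<and> f x y \<noteq> Some z} \<union> {z. f x' y \<noteq> None \<and> f x' y \<noteq> Some z} = UNIV"
      unfolding distinguishes_def by auto
    then have "1 = measure_pmf.prob (dec m y)
        ({z. f x y \<noteq> None \<and> f x y \<noteq> Some z} \<union> {z. f x' y \<noteq> None \<and> f x' y \<noteq> Some z})"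
      by simp
    also have "\<dots> \<le> err x y + err x' y"
      unfolding err_def by (rule measure_Un_le) auto
    finally show ?thesis using True by simp
  qed (simp add: err_def)
  then have "(LINT y|pY. indicator {y. distinguishes f y x x'} y) \<le> (LINT y|pY. err x y + err x' y)"
    by (intro integral_mono Bochner_Integration.integrable_add err_integrable
          measure_pmf.integrable_const_bound[where B=1]) auto
  also have "\<dots> = (LINT y|pY. err x y) + (LINT y|pY. err x' y)"
    by (rule Bochner_Integration.integral_add) (rule err_integrable)+
  finally show ?thesis
    by (simp add: decoding_error_def err_def)
qed

theorem lemmaE2:
  fixes f :: "'x::finite \<Rightarrow> 'y \<Rightarrow> 'z option"
    and pX :: "'x pmf" and pY :: "'y pmf"
    and enc :: "'x \<Rightarrow> 'm::finite pmf" and dec :: "'m \<Rightarrow> 'y \<Rightarrow> 'z pmf"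
    and incompat :: "'x \<Rightarrow> 'x \<Rightarrow> bool"
    and \<epsilon> \<alpha> :: real and Nmax :: nat
  assumes err: "error_prob f pX pY enc dec \<le> \<epsilon>"
    and sym: "\<And>x x'. incompat x x' \<Longrightarrow> incompat x' x"
    and alpha_pos: "\<alpha> > 0"
    and dist: "\<And>x x'. incompat x x' \<Longrightarrow> measure_pmf.prob pY {y. distinguishes f y x x'} \<ge> \<alpha>"
    and compat_bound: "\<And>x. card {x'. \<not> incompat x x'} \<le> Nmax"
    and Nmax_le: "Nmax \<le> CARD('x)"
  shows "mutual_info2 (input_msg pX enc) \<ge>
           entropy2 pX - log 2 Nmax - 1
             - (2 * \<epsilon> / \<alpha>) * (log 2 (CARD('x)) - log 2 Nmax)"
proof -
  define e where "e = decoding_error f pY dec"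
  define Bad where "Bad = {(x, m). \<alpha> / 2 \<le> e x m}"
  have "0 < card {x'. \<not> incompat x x'}" for x
    using dist[of x x] alpha_pos by (auto simp: distinguishes_def card_gt_0_iff)
  with compat_bound have "1 \<le> Nmax" by (metis Suc_le_eq le_trans One_nat_def)
  have "card {x. e x m < \<alpha> / 2} \<le> Nmax" for m
  proof (rule card_le_if_pairwise_compatible[OF _ compat_bound])
    fix x x' assume "x \<in> {x. e x m < \<alpha> / 2}" "x' \<in> {x. e x m < \<alpha> / 2}"
    then show "\<not> incompat x x'"
      using dist[of x x'] prob_distinguishes_le_decoding_error[of pY f x x' dec m]
      by (force simp: e_def)
  qed
  with \<open>1 \<le> Nmax\<close> Nmax_le have info:
    "entropy2 pX - log 2 Nmax - 1 - (log 2 CARD('x) - log 2 Nmax) * measure_pmf.prob (input_msg pX enc) Bad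
      \<le> mutual_info2 (input_msg pX enc)"
    using mutual_info2_ge_entropy2_two_level[of "\<lambda>x m. e x m < \<alpha> / 2" Nmax "input_msg pX enc"]
    by (simp add: Bad_def map_fst_input_msg not_less case_prod_unfold)
  have "measure_pmf.prob (input_msg pX enc) Bad \<le> error_prob f pX pY enc dec / (\<alpha> / 2)"
    unfolding Bad_def e_def by (rule prob_decoding_error_ge_le) (simp add: alpha_pos)
  also have "\<dots> \<le> 2 * \<epsilon> / \<alpha>"
    using err alpha_pos by (simp add: divide_right_mono)
  finally have "(log 2 CARD('x) - log 2 Nmax) * measure_pmf.prob (input_msg pX enc) Bad
      \<le> (log 2 CARD('x) - log 2 Nmax) * (2 * \<epsilon> / \<alpha>)"
    using \<open>1 \<le> Nmax\<close> Nmax_le by (intro mult_left_mono) auto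
  with info show ?thesis by (simp add: algebra_simps)
qed

end
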